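(* Let $\lambda>0$ and $\alpha_0,\tilde{\alpha}_0,\alpha,\tilde{\alpha}\in(0,1]$ with $\frac{\tilde{\alpha}}{\alpha}-\frac{\tilde{\alpha}_0}{\alpha_0}>0$. For $j\geq0$ set $\alpha_j=\alpha$, $\tilde\alpha_j=\tilde\alpha$ for $j\geq1$, $d_{k,j}:=\frac{\lambda^k}{\Gamma(\alpha_jk+1)}$, $D_j(x):=E_{\alpha_j,1}(\lambda x)$ and $\delta_j(t):=t^{\tilde{\alpha}_j}$; also set $v(\delta(t)):=t^{\tilde{\alpha}/\alpha}$ and $\Delta(u):=(\lambda u)^{1/\alpha}$. Then for all $u>0$, $$\lim_{t\to\infty}\frac{1}{t^{\tilde{\alpha}/\alpha}}\log\sum_{k\geq0}\frac{d_{k,k}(u\delta_k(t))^k}{D_k(\delta_k(t))}=\max\{\Delta(u)-\Delta(1),0\}=\max\{\lambda^{1/\alpha}(u^{1/\alpha}-1),0\}.$$ Explicitly, the sum equals $\frac{1}{E_{\alpha_0,1}(\lambda t^{\tilde{\alpha}_0})}+\sum_{k\geq1}\frac{\lambda^k(ut^{\tilde{\alpha}})^k}{\Gamma(\alpha k+1)E_{\alpha,1}(\lambda t^{\tilde{\alpha}})}$.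
   Context: For $a\in(0,1]$, $E_{a,1}(x):=\sum_{k\geq0}\frac{x^k}{\Gamma(ak+1)}$ denotes the Mittag-Leffler function (with two parameters $a$ and $1$). *)

theory Defs
  imports "HOL-Analysis.Analysis"
begin

definition mittag_leffler1 :: "real \<Rightarrow> real \<Rightarrow> real" where
  "mittag_leffler1 a x = (\<Sum>k. x ^ k / Gamma (a * real k + 1))"

end

theory Submission
  imports Defs "HOL-Real_Asymp.Real_Asymp"
begin

text \<open>The term k = 0 of the series is 1 / E_{\<alpha>0,1}(\<lambda> t^\<alpha>0'), and the terms k \<ge> 1 add up
  to (E_{\<alpha>,1}(\<lambda> u t^\<alpha>') - 1) / E_{\<alpha>,1}(\<lambda> t^\<alpha>'). Everything rests on
  ln E_{a,1}(z^a) ~ z as z \<rightarrow> \<infinity>: from below through the single term with a k closest to z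
  and the bound ln m! \<le> (m + 1) ln m - m + 1, from above through a geometric majorant.
  At the scale t^(\<alpha>'/\<alpha>) the logarithm of the first term therefore tends to 0, since
  \<alpha>0'/\<alpha>0 < \<alpha>'/\<alpha>, that of the tail tends to (\<lambda> u)^(1/\<alpha>) - \<lambda>^(1/\<alpha>), and the
  logarithm of a sum of two positive terms is the larger of their logarithms up to ln 2.\<close>

lemma ln_fact_le:
  assumes "m \<ge> 1"
  shows "ln (fact m :: real) \<le> (real m + 1) * ln (real m) + 1 - real m"
  using assms
proof (induction m rule: dec_induct)
  case base
  then show ?case by simp
next
  case (step m)
  have m: "real m \<ge> 1" using step by simp
  have "ln (real m / (real m + 1)) \<le> real m / (real m + 1) - 1"
    using m by (intro ln_le_minus_one) simp
  also have "\<dots> = - 1 / (real m + 1)" using m by (simp add: field_simps)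
  finally have "1 \<le> (real m + 1) * (ln (real m + 1) - ln (real m))"
    using m by (simp add: ln_div field_simps)
  moreover have "ln (fact (Suc m) :: real) = ln (real m + 1) + ln (fact m)"
    by (simp add: ln_mult add.commute)
  ultimately show ?case
    using step.IH by (simp add: algebra_simps)
qed

lemma ln_Gamma_plus_1_le:
  fixes x :: real
  assumes "x \<ge> 1/2"
  shows "ln (Gamma (x + 1)) \<le> (x + 2) * ln (x + 1) + 1 - x"
proof -
  define n where "n = nat \<lfloor>x\<rfloor>"
  have n: "real n \<le> x" "x < real n + 1" using assms by (auto simp: n_def)
  have "Gamma (x + 1) < Gamma (real (Suc n) + 1)"
    using assms n by (intro Gamma_real_strict_mono) auto
  also have "\<dots> = fact (Suc n)" using Gamma_fact[of "Suc n", where 'a = real] by (simp add: add.commute)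
  finally have "ln (Gamma (x + 1)) \<le> ln (fact (Suc n))"
    using assms by simp
  also have "\<dots> \<le> (real n + 2) * ln (real n + 1) - real n"
    using ln_fact_le[of "Suc n"] by (simp add: algebra_simps)
  also have "\<dots> \<le> (x + 2) * ln (x + 1) + 1 - x"
    using n mult_mono[of "real n + 2" "x + 2" "ln (real n + 1)" "ln (x + 1)"] by simp
  finally show ?thesis .
qed

lemma power_div_fact_le_exp:
  fixes w :: real
  assumes "w \<ge> 0"
  shows "w ^ n / fact n \<le> exp w"
proof -
  have exp_sums: "(\<lambda>k. w ^ k / fact k) sums exp w"
    using exp_converges[of w] by (simp add: divide_inverse mult.commute)
  have "sum (\<lambda>k. w ^ k / fact k) {n} \<le> (\<Sum>k. w ^ k / fact k)"
    using assms exp_sums by (intro sum_le_suminf) (auto simp: sums_iff)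
  then show ?thesis using exp_sums by (simp add: sums_iff)
qed

lemma Gamma_plus_1_ge_half:
  fixes x :: real
  assumes "0 \<le> x" "x < 1"
  shows "1/2 \<le> Gamma (x + 1)"
proof -
  have "Gamma 2 \<le> Gamma (x + 1 + 1)"
    using assms by (cases "x = 0") (auto intro!: less_imp_le Gamma_real_strict_mono)
  also have "\<dots> = (x + 1) * Gamma (x + 1)"
    using assms by (intro Gamma_plus1) (auto elim!: nonpos_Ints_cases)
  also have "\<dots> \<le> 2 * Gamma (x + 1)"
    using assms by (intro mult_right_mono) auto
  finally show ?thesis using Gamma_fact[of 1, where 'a = real] by simp
qed

lemma powr_div_Gamma_le:
  fixes w x :: real
  assumes "w \<ge> 1" "x \<ge> 0"
  shows "w powr x / Gamma (x + 1) \<le> 2 * w * exp w"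
proof (cases "x < 1")
  case True
  have "w powr x \<le> w" using assms True powr_mono[of x 1 w] by simp
  then have "w powr x / Gamma (x + 1) \<le> w / (1/2)"
    using Gamma_plus_1_ge_half assms True by (intro frac_le) auto
  also have "\<dots> \<le> 2 * w * exp w" using assms by simp
  finally show ?thesis .
next
  case False
  define n where "n = nat \<lfloor>x\<rfloor>"
  have n: "real n \<le> x" "x < real n + 1" "n \<ge> 1"
    using assms False by (auto simp: n_def le_nat_floor)
  have "fact n = Gamma (real n + 1)" using Gamma_fact[of n, where 'a = real] by (simp add: add.commute)
  also have "\<dots> \<le> Gamma (x + 1)"
    using n by (cases "real n = x") (auto intro!: less_imp_le Gamma_real_strict_mono)
  finally have Gamma_ge: "fact n \<le> Gamma (x + 1)" .
  have "w powr x \<le> w powr (real n + 1)" using assms n by (intro powr_mono) auto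
  also have "\<dots> = w * w ^ n" using assms by (simp add: powr_add powr_realpow)
  finally have "w powr x / Gamma (x + 1) \<le> w * w ^ n / fact n"
    using Gamma_ge assms by (intro frac_le) auto
  also have "\<dots> = w * (w ^ n / fact n)" by simp
  also have "\<dots> \<le> w * exp w"
    using assms power_div_fact_le_exp[of w n] by (intro mult_left_mono) auto
  also have "\<dots> \<le> 2 * w * exp w" using assms by simp
  finally show ?thesis .
qed

lemma Gamma_mult_of_nat_plus_1_pos: "a \<ge> 0 \<Longrightarrow> Gamma (a * real k + 1) > (0::real)"
  by (simp add: add_nonneg_pos)

text \<open>Writing z^(a k) = (c z)^(a k) c^(-a k) trades a factor c in the exponential for
  geometric decay in k.\<close>
lemma powr_power_div_Gamma_le:
  fixes a z c :: real
  assumes "a > 0" "z \<ge> 1" "c \<ge> 1"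
  shows "(z powr a) ^ k / Gamma (a * real k + 1) \<le> 2 * (c * z) * exp (c * z) * (c powr (-a)) ^ k"
proof -
  define x where "x = a * real k"
  have "x \<ge> 0" "c * z \<ge> 1" using assms mult_mono[of 1 c 1 z] by (auto simp: x_def)
  have "(z powr a) ^ k / Gamma (a * real k + 1) = ((c * z) powr x / Gamma (x + 1)) * c powr (-x)"
    using assms by (simp add: x_def powr_powr powr_realpow[symmetric] powr_mult powr_minus
        field_simps mult.commute)
  also have "\<dots> \<le> (2 * (c * z) * exp (c * z)) * c powr (-x)"
    using \<open>x \<ge> 0\<close> \<open>c * z \<ge> 1\<close> by (intro mult_right_mono powr_div_Gamma_le) auto
  also have "\<dots> = 2 * (c * z) * exp (c * z) * (c powr (-a)) ^ k"
    using assms by (simp add: x_def powr_powr powr_realpow[symmetric] mult.commute)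
  finally show ?thesis .
qed

lemma summable_mittag_leffler1:
  fixes a y :: real
  assumes "a > 0"
  shows "summable (\<lambda>k. y ^ k / Gamma (a * real k + 1))"
proof (rule summable_comparison_test)
  define z where "z = max 1 (\<bar>y\<bar> powr (1/a))"
  have "\<bar>y\<bar> = (\<bar>y\<bar> powr (1/a)) powr a" using assms by (simp add: powr_powr)
  also have "\<dots> \<le> z powr a" using assms by (intro powr_mono2) (auto simp: z_def)
  finally have y_le: "\<bar>y\<bar> \<le> z powr a" .
  have "norm ((2::real) powr (-a)) < 1" using assms by (simp add: powr_minus inverse_less_1_iff)
  then show "summable (\<lambda>k. 2 * (2 * z) * exp (2 * z) * ((2::real) powr (-a)) ^ k)"
    by (intro summable_mult summable_geometric)
  show "\<exists>N. \<forall>k\<ge>N. norm (y ^ k / Gamma (a * real k + 1))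
      \<le> 2 * (2 * z) * exp (2 * z) * ((2::real) powr (-a)) ^ k"
  proof (intro exI allI impI)
    fix k :: nat
    have "norm (y ^ k / Gamma (a * real k + 1)) \<le> (z powr a) ^ k / Gamma (a * real k + 1)"
      using assms Gamma_mult_of_nat_plus_1_pos[of a k] y_le
      by (simp add: power_abs divide_right_mono power_mono)
    also have "\<dots> \<le> 2 * (2 * z) * exp (2 * z) * ((2::real) powr (-a)) ^ k"
      using assms by (intro powr_power_div_Gamma_le) (auto simp: z_def)
    finally show "norm (y ^ k / Gamma (a * real k + 1))
        \<le> 2 * (2 * z) * exp (2 * z) * ((2::real) powr (-a)) ^ k" .
  qed
qed

lemma mittag_leffler1_sums:
  "a > 0 \<Longrightarrow> (\<lambda>k. y ^ k / Gamma (a * real k + 1)) sums mittag_leffler1 a y"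
  unfolding mittag_leffler1_def by (intro summable_sums summable_mittag_leffler1)

lemma mittag_leffler1_ge_partial_sum:
  assumes "a > 0" "y \<ge> 0" "finite K"
  shows "(\<Sum>k\<in>K. y ^ k / Gamma (a * real k + 1)) \<le> mittag_leffler1 a y"
  unfolding mittag_leffler1_def using assms Gamma_mult_of_nat_plus_1_pos[of a]
  by (intro sum_le_suminf summable_mittag_leffler1) (auto intro!: divide_nonneg_pos)

lemma mittag_leffler1_ge_1:
  assumes "a > 0" "y \<ge> 0"
  shows "1 \<le> mittag_leffler1 a y"
  using mittag_leffler1_ge_partial_sum[OF assms, of "{0}"] by simp

lemma mittag_leffler1_gt_1:
  assumes "a > 0" "y > 0"
  shows "1 < mittag_leffler1 a y"
proof -
  have "1 < 1 + y / Gamma (a + 1)" using assms by simp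
  also have "\<dots> = (\<Sum>k\<in>{0, 1}. y ^ k / Gamma (a * real k + 1))" by simp
  also have "\<dots> \<le> mittag_leffler1 a y"
    using assms by (intro mittag_leffler1_ge_partial_sum) auto
  finally show ?thesis .
qed

lemma mittag_leffler1_powr_le:
  fixes a z c :: real
  assumes "a > 0" "z \<ge> 1" "c > 1"
  shows "mittag_leffler1 a (z powr a) \<le> 2 * (c * z) * exp (c * z) / (1 - c powr (-a))"
proof -
  have "norm (c powr (-a)) < 1" using assms by (simp add: powr_minus inverse_less_1_iff)
  then have majorant_sums: "(\<lambda>k. 2 * (c * z) * exp (c * z) * (c powr (-a)) ^ k)
      sums (2 * (c * z) * exp (c * z) * (1 / (1 - c powr (-a))))"
    by (intro sums_mult geometric_sums)
  have "mittag_leffler1 a (z powr a) \<le> (\<Sum>k. 2 * (c * z) * exp (c * z) * (c powr (-a)) ^ k)"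
    unfolding mittag_leffler1_def using assms
    by (intro suminf_le powr_power_div_Gamma_le summable_mittag_leffler1
        sums_summable[OF majorant_sums]) auto
  then show ?thesis using majorant_sums by (simp add: sums_iff)
qed

lemma ln_mittag_leffler1_powr_ge:
  fixes a z :: real
  assumes "0 < a" "a \<le> 1" "z \<ge> 2"
  shows "(z - 1) * ln z - (z + 2) * ln (z + 1) + z - 2 \<le> ln (mittag_leffler1 a (z powr a))"
proof -
  define k where "k = nat \<lfloor>z / a\<rfloor>"
  define x where "x = a * real k"
  have "real k \<le> z / a" "z / a < real k + 1" using assms by (auto simp: k_def)
  then have x: "x \<le> z" "z - 1 < x" using assms by (auto simp: x_def field_simps)
  have "z powr x / Gamma (x + 1) \<le> mittag_leffler1 a (z powr a)"
    using mittag_leffler1_ge_partial_sum[of a "z powr a" "{k}"] assms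
    by (simp add: x_def powr_powr powr_realpow[symmetric] mult.commute)
  then have "ln (z powr x / Gamma (x + 1)) \<le> ln (mittag_leffler1 a (z powr a))"
    using assms x mittag_leffler1_ge_1[of a "z powr a"] by (subst ln_le_cancel_iff) auto
  moreover have "Gamma (x + 1) > 0" using assms x by simp
  ultimately have "x * ln z - ln (Gamma (x + 1)) \<le> ln (mittag_leffler1 a (z powr a))"
    using assms x by (simp add: ln_div)
  moreover have "ln (Gamma (x + 1)) \<le> (z + 2) * ln (z + 1) + 1 - x"
    using ln_Gamma_plus_1_le[of x] x assms mult_mono[of "x + 2" "z + 2" "ln (x + 1)" "ln (z + 1)"]
    by simp
  moreover have "(z - 1) * ln z \<le> x * ln z" using x assms by (intro mult_right_mono) auto
  ultimately show ?thesis using x by linarith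
qed

lemma ln_mittag_leffler1_powr_asymp:
  fixes a :: real
  assumes "0 < a" "a \<le> 1"
  shows "((\<lambda>z. ln (mittag_leffler1 a (z powr a)) / z) \<longlongrightarrow> 1) at_top"
proof (rule order_tendstoI)
  fix b :: real
  assume "b < 1"
  moreover have "((\<lambda>z::real. ((z - 1) * ln z - (z + 2) * ln (z + 1) + z - 2) / z) \<longlongrightarrow> 1) at_top"
    by real_asymp
  ultimately have "eventually (\<lambda>z. b < ((z - 1) * ln z - (z + 2) * ln (z + 1) + z - 2) / z) at_top"
    by (simp add: order_tendsto_iff)
  then show "eventually (\<lambda>z. b < ln (mittag_leffler1 a (z powr a)) / z) at_top"
    using eventually_ge_at_top[of "2::real"]
  proof eventually_elim
    case (elim z)
    have "((z - 1) * ln z - (z + 2) * ln (z + 1) + z - 2) / z \<le> ln (mittag_leffler1 a (z powr a)) / z"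
      using elim by (intro divide_right_mono ln_mittag_leffler1_powr_ge assms) auto
    then show ?case using elim by linarith
  qed
next
  fix b :: real
  assume "1 < b"
  define c where "c = (1 + b) / 2"
  have c: "1 < c" "c < b" using \<open>1 < b\<close> by (auto simp: c_def)
  define K where "K = ln 2 + ln c - ln (1 - c powr (-a))"
  have "((\<lambda>z::real. (K + ln z) / z + c) \<longlongrightarrow> 0 + c) at_top"
    by (intro tendsto_add tendsto_const) real_asymp
  then have "eventually (\<lambda>z. (K + ln z) / z + c < b) at_top"
    using c by (intro order_tendstoD) auto
  then show "eventually (\<lambda>z. ln (mittag_leffler1 a (z powr a)) / z < b) at_top"
    using eventually_ge_at_top[of "1::real"]
  proof eventually_elim
    case (elim z)
    have "0 < 1 - c powr (-a)" using c assms by (simp add: powr_minus inverse_less_1_iff)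
    then have "ln (mittag_leffler1 a (z powr a)) \<le> ln (2 * (c * z) * exp (c * z) / (1 - c powr (-a)))"
      using elim assms c mittag_leffler1_ge_1[of a "z powr a"]
      by (subst ln_le_cancel_iff) (auto intro!: mittag_leffler1_powr_le)
    also have "\<dots> = K + ln z + c * z"
      using assms c elim \<open>0 < 1 - c powr (-a)\<close> by (simp add: K_def ln_div ln_mult)
    finally have "ln (mittag_leffler1 a (z powr a)) / z \<le> (K + ln z + c * z) / z"
      using elim by (intro divide_right_mono) auto
    also have "\<dots> = (K + ln z) / z + c" using elim by (simp add: field_simps)
    finally show ?case using elim by linarith
  qed
qed

lemma ln_mittag_leffler1_growth:
  fixes a mu p :: real
  assumes "0 < a" "a \<le> 1" "0 < mu" "0 < p"
  shows "((\<lambda>t. ln (mittag_leffler1 a (mu * t powr p)) / t powr (p / a)) \<longlongrightarrow> mu powr (1 / a)) at_top"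
proof -
  define z where "z t = mu powr (1 / a) * t powr (p / a)" for t :: real
  have "filterlim z at_top at_top" unfolding z_def using assms
    by (intro filterlim_tendsto_pos_mult_at_top[OF tendsto_const] real_powr_at_top) auto
  from filterlim_compose[OF ln_mittag_leffler1_powr_asymp[OF assms(1,2)] this]
  have "((\<lambda>t. ln (mittag_leffler1 a (z t powr a)) / z t * mu powr (1 / a)) \<longlongrightarrow> 1 * mu powr (1 / a)) at_top"
    by (intro tendsto_mult tendsto_const)
  moreover have "eventually (\<lambda>t. ln (mittag_leffler1 a (z t powr a)) / z t * mu powr (1 / a)
      = ln (mittag_leffler1 a (mu * t powr p)) / t powr (p / a)) at_top"
    using eventually_gt_at_top[of "0::real"]
    by eventually_elim (use assms in \<open>simp add: z_def powr_mult powr_powr\<close>)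
  ultimately show ?thesis by (simp add: tendsto_cong)
qed

lemma ln_mittag_leffler1_negligible:
  fixes a mu p r :: real
  assumes "0 < a" "a \<le> 1" "0 < mu" "0 < p" "p / a < r"
  shows "((\<lambda>t. ln (mittag_leffler1 a (mu * t powr p)) / t powr r) \<longlongrightarrow> 0) at_top"
proof -
  have "((\<lambda>t. ln (mittag_leffler1 a (mu * t powr p)) / t powr (p / a) * t powr (p / a - r))
      \<longlongrightarrow> mu powr (1 / a) * 0) at_top"
    using assms by (intro tendsto_mult ln_mittag_leffler1_growth tendsto_neg_powr filterlim_ident) auto
  moreover have "eventually (\<lambda>t. ln (mittag_leffler1 a (mu * t powr p)) / t powr (p / a) * t powr (p / a - r)
      = ln (mittag_leffler1 a (mu * t powr p)) / t powr r) at_top"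
    using eventually_gt_at_top[of "0::real"] by eventually_elim (simp add: powr_diff)
  ultimately show ?thesis by (simp add: tendsto_cong)
qed

lemma ln_add_le_ln_2_plus_max:
  fixes A B :: real
  assumes "0 < A" "0 < B"
  shows "ln (A + B) \<le> ln 2 + max (ln A) (ln B)"
proof -
  have "ln (A + B) \<le> ln (2 * max A B)" using assms by (subst ln_le_cancel_iff) auto
  also have "\<dots> = ln 2 + max (ln A) (ln B)" using assms by (simp add: ln_mult max_def)
  finally show ?thesis .
qed

lemma tendsto_ln_add_div_max:
  fixes A B T :: "'a \<Rightarrow> real"
  assumes T: "filterlim T at_top F"
    and pos: "eventually (\<lambda>x. 0 < A x \<and> 0 < B x) F"
    and A: "((\<lambda>x. ln (A x) / T x) \<longlongrightarrow> a) F"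
    and B: "((\<lambda>x. ln (B x) / T x) \<longlongrightarrow> b) F"
  shows "((\<lambda>x. ln (A x + B x) / T x) \<longlongrightarrow> max a b) F"
proof -
  define M where "M x = max (ln (A x) / T x) (ln (B x) / T x)" for x
  have M: "(M \<longlongrightarrow> max a b) F"
    unfolding M_def by (intro tendsto_max A B)
  have "((\<lambda>x. ln 2 / T x) \<longlongrightarrow> 0) F"
    by (intro tendsto_divide_0[OF tendsto_const] filterlim_at_top_imp_at_infinity T)
  from tendsto_add[OF this M] have M_plus: "((\<lambda>x. ln 2 / T x + M x) \<longlongrightarrow> max a b) F"
    by simp
  have ev: "eventually (\<lambda>x. 0 < A x \<and> 0 < B x \<and> 0 < T x) F"
    using pos filterlim_at_top_dense[THEN iffD1, OF T, rule_format, of 0]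
    by eventually_elim auto
  have lower: "eventually (\<lambda>x. M x \<le> ln (A x + B x) / T x) F"
    using ev by eventually_elim (auto simp: M_def intro!: divide_right_mono)
  have upper: "eventually (\<lambda>x. ln (A x + B x) / T x \<le> ln 2 / T x + M x) F"
    using ev
  proof eventually_elim
    case (elim x)
    then have "ln (A x + B x) / T x \<le> (ln 2 + max (ln (A x)) (ln (B x))) / T x"
      by (intro divide_right_mono ln_add_le_ln_2_plus_max) auto
    then show ?case using elim by (simp add: M_def add_divide_distrib max_divide_distrib_right)
  qed
  show ?thesis by (rule tendsto_sandwich[OF lower upper M M_plus])
qed

lemma tendsto_ln_diff_1_div:
  fixes f T :: "'a \<Rightarrow> real"
  assumes T: "filterlim T at_top F"
    and gt_1: "eventually (\<lambda>x. 1 < f x) F"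
    and lim: "((\<lambda>x. ln (f x) / T x) \<longlongrightarrow> L) F"
    and "0 < L"
  shows "((\<lambda>x. ln (f x - 1) / T x) \<longlongrightarrow> L) F"
proof -
  have T_pos: "eventually (\<lambda>x. 0 < T x) F"
    using filterlim_at_top_dense[THEN iffD1, OF T] by blast
  have "filterlim (\<lambda>x. ln (f x) / T x * T x) at_top F"
    by (rule filterlim_tendsto_pos_mult_at_top[OF lim \<open>0 < L\<close> T])
  moreover have "eventually (\<lambda>x. ln (f x) / T x * T x = ln (f x)) F"
    using T_pos by eventually_elim simp
  ultimately have "filterlim (\<lambda>x. ln (f x)) at_top F"
    by (rule filterlim_mono_eventually[OF _ order_refl order_refl])
  then have "eventually (\<lambda>x. ln 2 \<le> ln (f x)) F"
    by (simp add: filterlim_at_top)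
  then have ev: "eventually (\<lambda>x. 2 \<le> f x \<and> 0 < T x) F"
    using gt_1 T_pos by eventually_elim auto
  have "((\<lambda>x. ln 2 / T x) \<longlongrightarrow> 0) F"
    by (intro tendsto_divide_0[OF tendsto_const] filterlim_at_top_imp_at_infinity T)
  from tendsto_diff[OF lim this]
  have lower_lim: "((\<lambda>x. ln (f x) / T x - ln 2 / T x) \<longlongrightarrow> L) F"
    by simp
  have lower: "eventually (\<lambda>x. ln (f x) / T x - ln 2 / T x \<le> ln (f x - 1) / T x) F"
    using ev
  proof eventually_elim
    case (elim x)
    then have "ln (f x / 2) \<le> ln (f x - 1)" by (subst ln_le_cancel_iff) auto
    then show ?case
      using elim by (simp add: ln_div diff_divide_distrib[symmetric] divide_right_mono)
  qed
  have upper: "eventually (\<lambda>x. ln (f x - 1) / T x \<le> ln (f x) / T x) F"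
    using ev by eventually_elim (auto intro!: divide_right_mono)
  show ?thesis by (rule tendsto_sandwich[OF lower upper lower_lim lim])
qed

lemma ln_mittag_leffler1_quotient_growth:
  fixes a lam mu p :: real
  assumes "0 < a" "a \<le> 1" "0 < lam" "0 < mu" "0 < p"
  shows "((\<lambda>t. ln ((mittag_leffler1 a (mu * t powr p) - 1) / mittag_leffler1 a (lam * t powr p))
            / t powr (p / a)) \<longlongrightarrow> mu powr (1 / a) - lam powr (1 / a)) at_top"
proof -
  define T where "T t = t powr (p / a)" for t :: real
  define E where "E c t = mittag_leffler1 a (c * t powr p)" for c t
  have T: "filterlim T at_top at_top" unfolding T_def using assms by (intro real_powr_at_top) simp
  have E_gt_1: "eventually (\<lambda>t. 1 < E mu t) at_top"
    using eventually_gt_at_top[of "0::real"] by eventually_elim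
      (use assms in \<open>auto simp: E_def intro!: mittag_leffler1_gt_1\<close>)
  have E_ge_1: "1 \<le> E lam t" for t
    unfolding E_def using assms by (auto intro!: mittag_leffler1_ge_1)
  have "((\<lambda>t. ln (E mu t) / T t) \<longlongrightarrow> mu powr (1 / a)) at_top"
    unfolding E_def T_def using assms by (intro ln_mittag_leffler1_growth)
  then have "((\<lambda>t. ln (E mu t - 1) / T t) \<longlongrightarrow> mu powr (1 / a)) at_top"
    using assms by (intro tendsto_ln_diff_1_div[OF T E_gt_1]) auto
  moreover have "((\<lambda>t. ln (E lam t) / T t) \<longlongrightarrow> lam powr (1 / a)) at_top"
    unfolding E_def T_def using assms by (intro ln_mittag_leffler1_growth)
  ultimately have "((\<lambda>t. ln (E mu t - 1) / T t - ln (E lam t) / T t)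
      \<longlongrightarrow> mu powr (1 / a) - lam powr (1 / a)) at_top"
    by (rule tendsto_diff)
  moreover have "eventually (\<lambda>t. ln (E mu t - 1) / T t - ln (E lam t) / T t
      = ln ((E mu t - 1) / E lam t) / T t) at_top"
    using E_gt_1
  proof eventually_elim
    case (elim t)
    have "ln ((E mu t - 1) / E lam t) = ln (E mu t - 1) - ln (E lam t)"
      using elim E_ge_1[of t] by (intro ln_divide_pos) auto
    then show ?case by (simp add: diff_divide_distrib)
  qed
  ultimately show ?thesis
    unfolding E_def T_def by (rule Lim_transform_eventually)
qed

lemma mittag_leffler1_quotient_series_eq:
  fixes lam u t \<alpha>0 \<alpha>0' \<alpha> \<alpha>' :: real and \<alpha>s \<alpha>s' :: "nat \<Rightarrow> real"
  assumes "0 < \<alpha>"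
    and "\<alpha>s 0 = \<alpha>0" "\<alpha>s' 0 = \<alpha>0'"
    and "\<And>j. j \<ge> 1 \<Longrightarrow> \<alpha>s j = \<alpha>" "\<And>j. j \<ge> 1 \<Longrightarrow> \<alpha>s' j = \<alpha>'"
  shows "(\<Sum>k. (lam ^ k / Gamma (\<alpha>s k * real k + 1)) * (u * t powr \<alpha>s' k) ^ k
            / mittag_leffler1 (\<alpha>s k) (lam * t powr \<alpha>s' k))
       = 1 / mittag_leffler1 \<alpha>0 (lam * t powr \<alpha>0')
         + (mittag_leffler1 \<alpha> (lam * u * t powr \<alpha>') - 1) / mittag_leffler1 \<alpha> (lam * t powr \<alpha>')"
    (is "(\<Sum>k. ?F k) = ?A + ?B")
proof -
  define g where "g k = (lam * u * t powr \<alpha>') ^ k / Gamma (\<alpha> * real k + 1)" for k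
  have "g sums mittag_leffler1 \<alpha> (lam * u * t powr \<alpha>')"
    unfolding g_def using assms(1) by (rule mittag_leffler1_sums)
  then have "(\<lambda>k. g (Suc k)) sums (mittag_leffler1 \<alpha> (lam * u * t powr \<alpha>') - 1)"
    by (subst sums_Suc_iff) (simp add: g_def)
  then have "(\<lambda>k. g (Suc k) / mittag_leffler1 \<alpha> (lam * t powr \<alpha>')) sums ?B"
    by (rule sums_divide)
  moreover have "?F (Suc k) = g (Suc k) / mittag_leffler1 \<alpha> (lam * t powr \<alpha>')" for k
    using assms(4,5)[of "Suc k"] by (simp add: g_def power_mult_distrib)
  ultimately have "(\<lambda>k. ?F (Suc k)) sums ?B" by simp
  then have "?F sums (?B + ?F 0)" by (subst sums_Suc_iff[symmetric]) simp
  moreover have "?F 0 = ?A" using assms(2,3) by simp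
  ultimately show ?thesis by (simp add: sums_iff add.commute)
qed

theorem lemma4p1:
  fixes lam \<alpha>0 \<alpha>0' \<alpha> \<alpha>' u :: real
    and \<alpha>s \<alpha>s' :: "nat \<Rightarrow> real"
  assumes "lam > 0"
    and "\<alpha>0 \<in> {0<..1}" "\<alpha>0' \<in> {0<..1}" "\<alpha> \<in> {0<..1}" "\<alpha>' \<in> {0<..1}"
    and "\<alpha>' / \<alpha> - \<alpha>0' / \<alpha>0 > 0"
    and "\<alpha>s 0 = \<alpha>0" "\<alpha>s' 0 = \<alpha>0'"
    and "\<And>j. j \<ge> 1 \<Longrightarrow> \<alpha>s j = \<alpha>" "\<And>j. j \<ge> 1 \<Longrightarrow> \<alpha>s' j = \<alpha>'"
    and "u > 0"
  shows "((\<lambda>t. ln (\<Sum>k. (lam ^ k / Gamma (\<alpha>s k * real k + 1)) * (u * t powr \<alpha>s' k) ^ k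
                     / mittag_leffler1 (\<alpha>s k) (lam * t powr \<alpha>s' k)) / t powr (\<alpha>' / \<alpha>))
          \<longlongrightarrow> max ((lam * u) powr (1 / \<alpha>) - lam powr (1 / \<alpha>)) 0) at_top"
proof -
  have \<alpha>0: "0 < \<alpha>0" "\<alpha>0 \<le> 1" "0 < \<alpha>0'" and \<alpha>: "0 < \<alpha>" "\<alpha> \<le> 1" "0 < \<alpha>'"
    using assms(2-5) by auto
  have "0 < lam * u" using assms(1,11) by simp
  define T where "T t = t powr (\<alpha>' / \<alpha>)" for t :: real
  define E0 where "E0 t = mittag_leffler1 \<alpha>0 (lam * t powr \<alpha>0')" for t
  define B where "B t = (mittag_leffler1 \<alpha> (lam * u * t powr \<alpha>') - 1)
                        / mittag_leffler1 \<alpha> (lam * t powr \<alpha>')" for t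
  have T: "filterlim T at_top at_top" unfolding T_def using \<alpha> by (intro real_powr_at_top) simp
  have E0_ge_1: "1 \<le> E0 t" for t
    unfolding E0_def using assms(1) \<alpha>0 by (intro mittag_leffler1_ge_1) auto
  have B_pos: "0 < B t" if "0 < t" for t
    unfolding B_def using that assms(1) \<alpha> \<open>0 < lam * u\<close>
      mittag_leffler1_gt_1[of \<alpha> "lam * u * t powr \<alpha>'"] mittag_leffler1_ge_1[of \<alpha> "lam * t powr \<alpha>'"]
    by simp
  have "((\<lambda>t. - (ln (E0 t) / T t)) \<longlongrightarrow> - 0) at_top"
    unfolding E0_def T_def using assms(1,6) \<alpha>0
    by (intro tendsto_minus ln_mittag_leffler1_negligible) auto
  moreover have "ln (1 / E0 t) = - ln (E0 t)" for t
    using E0_ge_1[of t] by (simp add: ln_div)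
  ultimately have head: "((\<lambda>t. ln (1 / E0 t) / T t) \<longlongrightarrow> 0) at_top"
    by simp
  have tail: "((\<lambda>t. ln (B t) / T t) \<longlongrightarrow> (lam * u) powr (1 / \<alpha>) - lam powr (1 / \<alpha>)) at_top"
    unfolding B_def T_def using assms(1) \<alpha> \<open>0 < lam * u\<close>
    by (intro ln_mittag_leffler1_quotient_growth) auto
  have "eventually (\<lambda>t. 0 < 1 / E0 t \<and> 0 < B t) at_top"
    using eventually_gt_at_top[of "0::real"]
    by eventually_elim (simp add: B_pos order.strict_trans2[OF zero_less_one E0_ge_1])
  from tendsto_ln_add_div_max[OF T this head tail]
  have "((\<lambda>t. ln (1 / E0 t + B t) / T t)
      \<longlongrightarrow> max ((lam * u) powr (1 / \<alpha>) - lam powr (1 / \<alpha>)) 0) at_top"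
    by (simp add: max.commute)
  moreover have "(\<Sum>k. (lam ^ k / Gamma (\<alpha>s k * real k + 1)) * (u * t powr \<alpha>s' k) ^ k
                     / mittag_leffler1 (\<alpha>s k) (lam * t powr \<alpha>s' k)) = 1 / E0 t + B t" for t
    unfolding E0_def B_def using \<alpha>(1) assms(7-10) by (rule mittag_leffler1_quotient_series_eq)
  ultimately show ?thesis by (simp only: T_def)
qed

end
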